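(* Let $G$ be of type $A_{N}$ with simple roots identified with $\Pi=\{1,\dots,N\}$. Let $J'\subseteq J\subseteq\Pi$ with $J\subseteq[a,b]$ for some $a,b\in\Pi$, and let $A\subseteq\Pi\setminus[a-1,b+1]$. Then \[ \gamma_{J/J'}=\gamma_{J\sqcup A/J'\sqcup A}\in Q_{m,W},\qquad Y_{J/J'}=Y_{J\sqcup A/J'\sqcup A}\in Q_{t,W}. \]
   Context: General notation. $W$ is the Weyl group, $\Sigma^\pm$ are the positive and negative roots, and $\ell$ is the length function. For $K\subseteq\Pi$: - $W_K$ is the parabolic subgroup with longest element $w_K$, - $W^K$ is the set of minimal length representatives of $W/W_K$, - $\Sigma^-_K$ is the set of negative roots $\alpha$ with $s_\alpha\in W_K$. For $K'\subseteq K$ set $w_{K/K'}=w_Kw_{K'}$. Multiplicative side. Take $R=\mathbb Z[t,t^{-1},(t+t^{-1})^{-1}]$. $Q_{m,W}$ is the twisted group algebra (basis $\delta^m_w$, product $(p\delta_w)(p'\delta_{w'})=p\,w(p')\delta_{ww'}$) over $Q_m=R[[X^*(T)]]_{F_m}[1/x_\alpha:\alpha>0]$, with $F_m(x,y)=x+y-xy$ and $x_\lambda=1-e^{-\lambda}$. Let \[ \tau_i=\frac{t^{-1}-t}{1-e^{-\alpha_i}}+\frac{t-t^{-1}e^{-\alpha_i}}{1-e^{-\alpha_i}}\delta^m_{s_i}, \] let $\tau_v$ be the product over a reduced word, and $t_v=t^{\ell(v)}$. Define \[ \gamma_{K/K'}:=\sum_{v\in W_K\cap W^{K'}}t_{w_{K/K'}}t_v^{-1}\tau_v.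 \] Hyperbolic side. $Q_{t,W}$ is the analogous twisted group algebra for the hyperbolic formal group law $F_t(x,y)=\frac{x+y-xy}{1-\mu^{-2}xy}$, $\mu=t+t^{-1}$. Define \[ x_{K/K'}=\prod_{\alpha\in\Sigma^-_K\setminus\Sigma^-_{K'}}x_\alpha,\qquad Y_{K/K'}:=\Bigl(\sum_{w\in W_{K/K'}}\delta^t_w\Bigr)\frac{1}{x_{K/K'}}, \] where $W_{K/K'}$ is any set of left coset representatives of $W_K/W_{K'}$ (the result is independent of this choice). *)

theory Defs
  imports Main "HOL-Combinatorics.Permutations"
begin

text \<open>Type A_N: the Weyl group W is the symmetric group on I = {1..N+1},
  realised as permutations nat => nat of {1..N+1}; the simple root alpha_i
  (i in Pi = {1..N}) is eps_i - eps_(i+1), with simple reflection s_i = (i i+1).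
  A root eps_i - eps_j (i, j in I, i /= j) is encoded by the pair (i,j);
  it is negative iff i > j, and its reflection is the transposition (i j).\<close>

definition Iset :: "nat \<Rightarrow> nat set" where
  "Iset N = {1..Suc N}"

definition Wgrp :: "nat \<Rightarrow> (nat \<Rightarrow> nat) set" where
  "Wgrp N = {p. p permutes Iset N}"

definition sref :: "nat \<Rightarrow> nat \<Rightarrow> nat" where
  "sref i = transpose i (Suc i)"

definition word_prod :: "nat list \<Rightarrow> nat \<Rightarrow> nat" where
  "word_prod ws = foldr (\<lambda>i acc. sref i \<circ> acc) ws id"

definition coxlen :: "nat \<Rightarrow> (nat \<Rightarrow> nat) \<Rightarrow> nat" where
  "coxlen N w = (LEAST n. \<exists>ws. length ws = n \<and> set ws \<subseteq> {1..N} \<and> word_prod ws = w)"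

definition reduced_word :: "nat \<Rightarrow> (nat \<Rightarrow> nat) \<Rightarrow> nat list \<Rightarrow> bool" where
  "reduced_word N w ws \<longleftrightarrow> set ws \<subseteq> {1..N} \<and> word_prod ws = w \<and> length ws = coxlen N w"

definition parab :: "nat set \<Rightarrow> (nat \<Rightarrow> nat) set" where
  "parab K = {word_prod ws | ws. set ws \<subseteq> K}"

definition longest :: "nat \<Rightarrow> nat set \<Rightarrow> nat \<Rightarrow> nat" where
  "longest N K = (THE w. w \<in> parab K \<and> (\<forall>u\<in>parab K. coxlen N u \<le> coxlen N w))"

definition minreps :: "nat \<Rightarrow> nat set \<Rightarrow> (nat \<Rightarrow> nat) set" where
  "minreps N K = {w \<in> Wgrp N. \<forall>u\<in>parab K. coxlen N w \<le> coxlen N (w \<circ> u)}"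

definition negroots :: "nat \<Rightarrow> nat set \<Rightarrow> (nat \<times> nat) set" where
  "negroots N K = {(i,j). 1 \<le> j \<and> j < i \<and> i \<le> Suc N \<and> transpose i j \<in> parab K}"

text \<open>An element sum_w p_w delta_w is the function w |-> p_w (zero outside W).
  Product: (p delta_w)(p' delta_w') = p w(p') delta_(ww').\<close>

definition tga_mult :: "nat \<Rightarrow> ((nat \<Rightarrow> nat) \<Rightarrow> 'q \<Rightarrow> 'q) \<Rightarrow>
    ((nat \<Rightarrow> nat) \<Rightarrow> 'q::comm_ring_1) \<Rightarrow> ((nat \<Rightarrow> nat) \<Rightarrow> 'q) \<Rightarrow> (nat \<Rightarrow> nat) \<Rightarrow> 'q" where
  "tga_mult N act f g = (\<lambda>u. if u \<in> Wgrp N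
      then (\<Sum>w\<in>Wgrp N. f w * act w (g (inv w \<circ> u))) else 0)"

definition tga_delta :: "(nat \<Rightarrow> nat) \<Rightarrow> (nat \<Rightarrow> nat) \<Rightarrow> 'q::comm_ring_1" where
  "tga_delta w = (\<lambda>u. if u = w then 1 else 0)"

definition tga_one :: "(nat \<Rightarrow> nat) \<Rightarrow> 'q::comm_ring_1" where
  "tga_one = tga_delta id"

text \<open>Abstract data of a coefficient field with the properties of (the fraction field
  of) Q_m resp. Q_t which are relevant: a W-action by ring automorphisms fixing
  the base ring R (in particular t), and the elements attached to roots.
  On the multiplicative side, em i j stands for e^(-(eps_i - eps_j)), so that
  x_(eps_i - eps_j) = 1 - em i j.  On the hyperbolic side, xh i j stands for
  x_(eps_i - eps_j) in the hyperbolic formal group ring.\<close>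

definition W_action :: "nat \<Rightarrow> ((nat \<Rightarrow> nat) \<Rightarrow> 'q \<Rightarrow> 'q) \<Rightarrow> 'q::field \<Rightarrow> bool" where
  "W_action N act t \<longleftrightarrow>
     act id = id \<and>
     (\<forall>w\<in>Wgrp N. \<forall>v\<in>Wgrp N. act (w \<circ> v) = act w \<circ> act v) \<and>
     (\<forall>w\<in>Wgrp N. \<forall>a b. act w (a + b) = act w a + act w b \<and> act w (a * b) = act w a * act w b) \<and>
     (\<forall>w\<in>Wgrp N. act w 1 = 1 \<and> act w t = t) \<and>
     t \<noteq> 0 \<and> t + inverse t \<noteq> 0"

definition mult_setting :: "nat \<Rightarrow> ((nat \<Rightarrow> nat) \<Rightarrow> 'q \<Rightarrow> 'q) \<Rightarrow> (nat \<Rightarrow> nat \<Rightarrow> 'q) \<Rightarrow> 'q::field \<Rightarrow> bool" where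
  "mult_setting N act em t \<longleftrightarrow> W_action N act t \<and>
     (\<forall>w\<in>Wgrp N. \<forall>i\<in>Iset N. \<forall>j\<in>Iset N. act w (em i j) = em (w i) (w j)) \<and>
     (\<forall>i\<in>Iset N. em i i = 1) \<and>
     (\<forall>i\<in>Iset N. \<forall>j\<in>Iset N. \<forall>k\<in>Iset N. em i j * em j k = em i k) \<and>
     (\<forall>i\<in>Iset N. \<forall>j\<in>Iset N. i \<noteq> j \<longrightarrow> em i j \<noteq> 1)"

definition hyp_setting :: "nat \<Rightarrow> ((nat \<Rightarrow> nat) \<Rightarrow> 'q \<Rightarrow> 'q) \<Rightarrow> (nat \<Rightarrow> nat \<Rightarrow> 'q) \<Rightarrow> 'q::field \<Rightarrow> bool" where
  "hyp_setting N act xh t \<longleftrightarrow> W_action N act t \<and>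
     (\<forall>w\<in>Wgrp N. \<forall>i\<in>Iset N. \<forall>j\<in>Iset N. act w (xh i j) = xh (w i) (w j)) \<and>
     (\<forall>i\<in>Iset N. xh i i = 0) \<and>
     (\<forall>i\<in>Iset N. \<forall>j\<in>Iset N. \<forall>k\<in>Iset N.
        xh i k * (1 - xh i j * xh j k / (t + inverse t)^2) = xh i j + xh j k - xh i j * xh j k) \<and>
     (\<forall>i\<in>Iset N. \<forall>j\<in>Iset N. i \<noteq> j \<longrightarrow> xh i j \<noteq> 0)"

definition tau :: "(nat \<Rightarrow> nat \<Rightarrow> 'q::field) \<Rightarrow> 'q \<Rightarrow> nat \<Rightarrow> (nat \<Rightarrow> nat) \<Rightarrow> 'q" where
  "tau em t i = (\<lambda>u.
      if u = id then (inverse t - t) / (1 - em i (Suc i))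
      else if u = sref i then (t - inverse t * em i (Suc i)) / (1 - em i (Suc i))
      else 0)"

definition tau_elt :: "nat \<Rightarrow> ((nat \<Rightarrow> nat) \<Rightarrow> 'q \<Rightarrow> 'q) \<Rightarrow> (nat \<Rightarrow> nat \<Rightarrow> 'q::field) \<Rightarrow> 'q
    \<Rightarrow> (nat \<Rightarrow> nat) \<Rightarrow> (nat \<Rightarrow> nat) \<Rightarrow> 'q" where
  "tau_elt N act em t v =
     foldr (\<lambda>i acc. tga_mult N act (tau em t i) acc) (SOME ws. reduced_word N v ws) tga_one"

definition gamma :: "nat \<Rightarrow> ((nat \<Rightarrow> nat) \<Rightarrow> 'q \<Rightarrow> 'q) \<Rightarrow> (nat \<Rightarrow> nat \<Rightarrow> 'q::field) \<Rightarrow> 'q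
    \<Rightarrow> nat set \<Rightarrow> nat set \<Rightarrow> (nat \<Rightarrow> nat) \<Rightarrow> 'q" where
  "gamma N act em t K K' = (\<lambda>u. \<Sum>v\<in>parab K \<inter> minreps N K'.
      t ^ coxlen N (longest N K \<circ> longest N K') * inverse (t ^ coxlen N v) * tau_elt N act em t v u)"

definition xquot :: "nat \<Rightarrow> (nat \<Rightarrow> nat \<Rightarrow> 'q::field) \<Rightarrow> nat set \<Rightarrow> nat set \<Rightarrow> 'q" where
  "xquot N xh K K' = (\<Prod>(i,j)\<in>negroots N K - negroots N K'. xh i j)"

text \<open>Left coset representatives of W_K/W_K' are taken to be W_K \<inter> W^K'
  (the result does not depend on this choice).\<close>
definition Yop :: "nat \<Rightarrow> ((nat \<Rightarrow> nat) \<Rightarrow> 'q \<Rightarrow> 'q) \<Rightarrow> (nat \<Rightarrow> nat \<Rightarrow> 'q::field)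
    \<Rightarrow> nat set \<Rightarrow> nat set \<Rightarrow> (nat \<Rightarrow> nat) \<Rightarrow> 'q" where
  "Yop N act xh K K' = tga_mult N act
      (\<lambda>u. \<Sum>w\<in>parab K \<inter> minreps N K'. tga_delta w u)
      (\<lambda>u. inverse (xquot N xh K K') * tga_one u)"

end

theory Submission
  imports Defs
begin

text \<open>
  Both gamma_(K/K') and Y_(K/K') are built from three combinatorial data only: the set
  W_K \<inter> W^K' of coset representatives, the length of w_K w_K', and the root set
  Sigma^-_K - Sigma^-_K'. So it suffices to see that these data agree for (J, J') and
  (J \<union> A, J' \<union> A); no property of the coefficient rings is used.

  Since s_(a-1) and s_(b+1) do not occur in J \<union> A, the group W_J permutes the letters
  a..b+1 and W_A the remaining ones, so W_(J \<union> A) = W_J W_A with commuting factors.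
  The Coxeter length is the number of inversions, and it is additive on this product
  because no inversion crosses the two cuts. Hence w_(J \<union> A) = w_J w_A with w_A an
  involution, which gives w_(J \<union> A) w_(J' \<union> A) = w_J w_J'; an element x y with x in W_J,
  y in W_A is minimal in its coset modulo W_(J' \<union> A) only if y = 1; and a negative root
  eps_i - eps_j lies in Sigma^-_K iff s_j, ..., s_(i-1) all lie in K, while an interval
  contained in J \<union> A lies in J or in A.
\<close>

section \<open>Inversions and Coxeter length\<close>

lemma word_prod_Nil [simp]: "word_prod [] = id"
  by (simp add: word_prod_def)

lemma word_prod_Cons [simp]: "word_prod (i # ws) = sref i \<circ> word_prod ws"
  by (simp add: word_prod_def)

lemma word_prod_append: "word_prod (xs @ ys) = word_prod xs \<circ> word_prod ys"
  by (induction xs) (auto simp: comp_assoc)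

lemma sref_sref [simp]: "sref k (sref k i) = i"
  by (simp add: sref_def)

lemma sref_comp_sref [simp]: "sref k \<circ> sref k = id"
  by (simp add: sref_def)

lemma sref_permutes_Iset: "i \<in> {1..N} \<Longrightarrow> sref i permutes Iset N"
  unfolding sref_def Iset_def by (rule permutes_swap_id) auto

lemma word_prod_permutes_Iset: "set ws \<subseteq> {1..N} \<Longrightarrow> word_prod ws permutes Iset N"
  by (induction ws) (auto intro: permutes_compose[OF _ sref_permutes_Iset] permutes_id)

lemma transp_chain:
  assumes R: "transp R" and steps: "\<And>k. x \<le> k \<Longrightarrow> k < y \<Longrightarrow> R (f k) (f (Suc k))"
    and "x < y"
  shows "R (f x) (f y)"
proof -
  have "Suc x \<le> y" using \<open>x < y\<close> by simp
  then show ?thesis using steps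
  proof (induction y rule: dec_induct)
    case base
    then show ?case by simp
  next
    case (step n)
    then have "R (f x) (f n)" and "R (f n) (f (Suc n))" by simp_all
    then show ?case by (rule transpD[OF R])
  qed
qed

definition inversions :: "nat \<Rightarrow> (nat \<Rightarrow> nat) \<Rightarrow> (nat \<times> nat) set" where
  "inversions N p = {(i, j). i \<in> Iset N \<and> j \<in> Iset N \<and> i < j \<and> p j < p i}"

definition inversion_number :: "nat \<Rightarrow> (nat \<Rightarrow> nat) \<Rightarrow> nat" where
  "inversion_number N p = card (inversions N p)"

lemma finite_inversions [simp]: "finite (inversions N p)"
  unfolding inversions_def Iset_def
  by (rule finite_subset[of _ "{1..Suc N} \<times> {1..Suc N}"]) auto

lemma inversions_id [simp]: "inversions N id = {}"
  by (auto simp: inversions_def)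

lemma inversion_number_id [simp]: "inversion_number N id = 0"
  by (simp add: inversion_number_def)

lemma card_le_value:
  assumes p: "p permutes Iset N" and i: "i \<in> Iset N"
  shows "card {j \<in> Iset N. p j \<le> p i} = p i"
proof -
  have pi: "p i \<in> Iset N" using permutes_in_image[OF p] i by simp
  have "p ` {j \<in> Iset N. p j \<le> p i} = {1..p i}"
  proof (intro equalityI subsetI)
    fix y assume "y \<in> p ` {j \<in> Iset N. p j \<le> p i}"
    then show "y \<in> {1..p i}" using permutes_in_image[OF p] by (auto simp: Iset_def)
  next
    fix y assume y: "y \<in> {1..p i}"
    then have "y \<in> p ` Iset N" using pi permutes_image[OF p] by (auto simp: Iset_def)
    with y show "y \<in> p ` {j \<in> Iset N. p j \<le> p i}" by auto
  qed
  moreover have "inj_on p {j \<in> Iset N. p j \<le> p i}"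
    using permutes_inj[OF p] by (rule inj_on_subset) simp
  ultimately show ?thesis by (metis card_atLeastAtMost card_image diff_Suc_1)
qed

lemma permutes_Iset_eq_if_inversions_eq:
  assumes p: "p permutes Iset N" and q: "q permutes Iset N"
    and pq: "inversions N p = inversions N q"
  shows "p = q"
proof
  fix i
  show "p i = q i"
  proof (cases "i \<in> Iset N")
    case True
    \<comment> \<open>p i counts the j with p j \<le> p i, and the inversions determine which j these are\<close>
    have below: "{j \<in> Iset N. r j \<le> r i} = {j \<in> Iset N. j = i
        \<or> (j < i \<and> (j, i) \<notin> inversions N r) \<or> (i < j \<and> (i, j) \<in> inversions N r)}"
      if r: "r permutes Iset N" for r
    proof -
      have "r j \<noteq> r i" if "j \<noteq> i" for j
        using permutes_inj[OF r] that by (meson injD)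
      then have "r j \<le> r i \<longleftrightarrow> j = i \<or> (j < i \<and> \<not> r i < r j) \<or> (i < j \<and> r j < r i)" for j
        by (cases j i rule: linorder_cases) fastforce+
      then show ?thesis using True by (auto simp: inversions_def)
    qed
    have "p i = card {j \<in> Iset N. p j \<le> p i}" using card_le_value[OF p True] by simp
    also have "\<dots> = card {j \<in> Iset N. q j \<le> q i}" unfolding below[OF p] below[OF q] pq ..
    also have "\<dots> = q i" using card_le_value[OF q True] .
    finally show ?thesis .
  next
    case False
    then show ?thesis using permutes_not_in[OF p] permutes_not_in[OF q] by simp
  qed
qed

lemma permutes_Iset_descent:
  assumes p: "p permutes Iset N" and "p \<noteq> id"
  shows "\<exists>k\<in>{1..N}. p (Suc k) < p k"
proof -
  have "inversions N p \<noteq> {}"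
  proof
    assume "inversions N p = {}"
    then have "p = id" by (intro permutes_Iset_eq_if_inversions_eq[OF p permutes_id]) simp
    with assms(2) show False ..
  qed
  then obtain i j where ij: "i \<in> Iset N" "j \<in> Iset N" "i < j" "p j < p i"
    by (auto simp: inversions_def)
  have "\<exists>k. i \<le> k \<and> k < j \<and> \<not> p k < p (Suc k)"
  proof (rule ccontr)
    assume "\<nexists>k. i \<le> k \<and> k < j \<and> \<not> p k < p (Suc k)"
    then have "p i < p j" by (intro transp_chain[of "(<)" i j p]) (auto simp: ij(3))
    with ij(4) show False by simp
  qed
  then obtain k where k: "i \<le> k" "k < j" "\<not> p k < p (Suc k)" by blast
  have "p k \<noteq> p (Suc k)" using permutes_inj[OF p] by (metis injD n_not_Suc_n)
  with k have "p (Suc k) < p k" by simp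
  moreover have "k \<in> {1..N}" using k ij by (simp add: Iset_def)
  ultimately show ?thesis by blast
qed

lemma inversions_comp_sref:
  assumes k: "k \<in> {1..N}"
  shows "inversions N (p \<circ> sref k) - {(k, Suc k)}
       = map_prod (sref k) (sref k) ` (inversions N p - {(k, Suc k)})"
proof -
  let ?s = "sref k" and ?D = "(k, Suc k)"
  have into: "map_prod ?s ?s ` (inversions N q - {?D}) \<subseteq> inversions N (q \<circ> ?s) - {?D}" for q
  proof -
    have "?s i < ?s j" "(?s i, ?s j) \<noteq> ?D" if "i < j" "(i, j) \<noteq> ?D" for i j
      using that unfolding sref_def transpose_def by auto
    moreover have "?s i \<in> Iset N \<longleftrightarrow> i \<in> Iset N" for i
      using k unfolding sref_def transpose_def Iset_def by auto
    ultimately show ?thesis by (auto simp: inversions_def)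
  qed
  show ?thesis
  proof
    show "inversions N (p \<circ> ?s) - {?D} \<subseteq> map_prod ?s ?s ` (inversions N p - {?D})"
    proof
      fix x assume "x \<in> inversions N (p \<circ> ?s) - {?D}"
      then have "map_prod ?s ?s x \<in> inversions N p - {?D}"
        using into[of "p \<circ> ?s"] by (auto simp: comp_assoc)
      then show "x \<in> map_prod ?s ?s ` (inversions N p - {?D})"
        by (rule rev_image_eqI) (cases x, simp)
    qed
  qed (rule into)
qed

text \<open>Stated additively: the correction terms avoid truncated subtraction.\<close>

lemma inversion_number_comp_sref:
  assumes k: "k \<in> {1..N}"
  shows "inversion_number N (p \<circ> sref k) + (if p (Suc k) < p k then 1 else 0)
       = inversion_number N p + (if p k < p (Suc k) then 1 else 0)"
proof -
  let ?D = "(k, Suc k)"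
  have "inj (map_prod (sref k) (sref k))"
    by (rule map_prod_inj_on[of _ UNIV _ UNIV, simplified]) (simp_all add: sref_def)
  then have rest: "card (inversions N (p \<circ> sref k) - {?D}) = card (inversions N p - {?D})"
    unfolding inversions_comp_sref[OF k] by (rule card_image[OF inj_on_subset]) simp
  have split: "inversion_number N q
      = card (inversions N q - {?D}) + (if ?D \<in> inversions N q then 1 else 0)" for q
  proof (cases "?D \<in> inversions N q")
    case True
    then show ?thesis using card.remove[OF finite_inversions True] by (simp add: inversion_number_def)
  qed (simp add: inversion_number_def)
  have "k \<in> Iset N" "Suc k \<in> Iset N" using k by (auto simp: Iset_def)
  then have "?D \<in> inversions N p \<longleftrightarrow> p (Suc k) < p k"
    and "?D \<in> inversions N (p \<circ> sref k) \<longleftrightarrow> p k < p (Suc k)"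
    by (simp_all add: inversions_def sref_def)
  then show ?thesis using split[of p] split[of "p \<circ> sref k"] rest by simp
qed

definition respects_cut :: "nat \<Rightarrow> (nat \<Rightarrow> nat) \<Rightarrow> bool" where
  "respects_cut k p \<longleftrightarrow> (\<forall>x. p x \<le> k \<longleftrightarrow> x \<le> k)"

lemma respects_cut_comp: "respects_cut k p \<Longrightarrow> respects_cut k q \<Longrightarrow> respects_cut k (p \<circ> q)"
  by (simp add: respects_cut_def)

lemma respects_cut_inv: "p permutes S \<Longrightarrow> respects_cut k p \<Longrightarrow> respects_cut k (inv p)"
  unfolding respects_cut_def by (metis permutes_inverses(1))

lemma sref_respects_cut: "i \<noteq> k \<Longrightarrow> respects_cut k (sref i)"
  unfolding respects_cut_def sref_def transpose_def by auto

lemma word_prod_respects_cut: "k \<notin> set ws \<Longrightarrow> respects_cut k (word_prod ws)"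
proof (induction ws)
  case Nil
  then show ?case by (simp add: respects_cut_def)
next
  case (Cons i ws)
  then show ?case
    unfolding word_prod_Cons by (intro respects_cut_comp sref_respects_cut) auto
qed

lemma inversion_within_cut:
  assumes cut: "respects_cut c p" and ij: "(i, j) \<in> inversions N p" and "i \<le> c"
  shows "j \<le> c"
proof -
  have "p j < p i" using ij by (simp add: inversions_def)
  moreover have "p i \<le> c" using cut \<open>i \<le> c\<close> by (simp add: respects_cut_def)
  ultimately have "p j \<le> c" by simp
  then show ?thesis using cut by (simp add: respects_cut_def)
qed

lemma word_of_length_inversion_number:
  assumes "p permutes Iset N" and "\<forall>k\<in>{1..N}. k \<notin> K \<longrightarrow> respects_cut k p"
  shows "\<exists>ws. set ws \<subseteq> K \<and> length ws = inversion_number N p \<and> word_prod ws = p"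
  using assms
proof (induction "inversion_number N p" arbitrary: p)
  case 0
  then have "p = id"
    using permutes_Iset_eq_if_inversions_eq[OF _ permutes_id] by (simp add: inversion_number_def)
  then show ?case using 0 by (intro exI[of _ "[]"]) auto
next
  case (Suc n)
  \<comment> \<open>bubble sort: a descent k of p is not a respected cut, so k \<in> K, and p s_k has one
    inversion less\<close>
  then have "p \<noteq> id" by (auto simp: inversion_number_def)
  then obtain k where k: "k \<in> {1..N}" "p (Suc k) < p k"
    using permutes_Iset_descent[OF Suc.prems(1)] by blast
  have "k \<in> K"
  proof (rule ccontr)
    assume "k \<notin> K"
    then have "respects_cut k p" using Suc.prems(2) k(1) by blast
    then have "p k \<le> k" "\<not> p (Suc k) \<le> k" by (simp_all add: respects_cut_def)
    with k(2) show False by simp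
  qed
  define q where "q = p \<circ> sref k"
  have "q permutes Iset N"
    unfolding q_def using permutes_compose[OF sref_permutes_Iset[OF k(1)] Suc.prems(1)] .
  moreover have "\<forall>k'\<in>{1..N}. k' \<notin> K \<longrightarrow> respects_cut k' q"
    using Suc.prems(2) \<open>k \<in> K\<close> unfolding q_def
    by (metis respects_cut_comp sref_respects_cut)
  moreover have "n = inversion_number N q"
    using inversion_number_comp_sref[OF k(1), of p] k(2) Suc.hyps(2) unfolding q_def by simp
  ultimately obtain ws where ws: "set ws \<subseteq> K" "length ws = n" "word_prod ws = q"
    using Suc.hyps(1) by blast
  have "word_prod (ws @ [k]) = p"
    unfolding word_prod_append ws(3) q_def by (simp add: comp_assoc)
  with ws \<open>k \<in> K\<close> Suc.hyps(2) show ?case by (intro exI[of _ "ws @ [k]"]) auto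
qed

lemma inversion_number_word_prod_le:
  "set ws \<subseteq> {1..N} \<Longrightarrow> inversion_number N (word_prod ws) \<le> length ws"
proof (induction ws rule: rev_induct)
  case (snoc k ws)
  then have "k \<in> {1..N}" "inversion_number N (word_prod ws) \<le> length ws" by auto
  then have "inversion_number N (word_prod ws \<circ> sref k) \<le> length (ws @ [k])"
    using inversion_number_comp_sref[of k N "word_prod ws"] by (auto split: if_splits)
  then show ?case by (simp only: word_prod_append word_prod_Cons word_prod_Nil comp_id)
qed simp

lemma coxlen_eq_inversion_number:
  assumes "w \<in> Wgrp N"
  shows "coxlen N w = inversion_number N w"
proof -
  have words: "\<exists>ws. length ws = inversion_number N w \<and> set ws \<subseteq> {1..N} \<and> word_prod ws = w"
    using word_of_length_inversion_number[of w N "{1..N}"] assms by (auto simp: Wgrp_def)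
  then have "coxlen N w \<le> inversion_number N w"
    unfolding coxlen_def by (rule Least_le)
  moreover have "\<exists>ws. length ws = coxlen N w \<and> set ws \<subseteq> {1..N} \<and> word_prod ws = w"
    unfolding coxlen_def by (rule LeastI_ex) (use words in blast)
  then obtain ws where "length ws = coxlen N w" "set ws \<subseteq> {1..N}" "word_prod ws = w"
    by blast
  then have "inversion_number N w \<le> coxlen N w"
    using inversion_number_word_prod_le by metis
  ultimately show ?thesis by simp
qed

lemma coxlen_id [simp]: "coxlen N id = 0"
  unfolding coxlen_def by (rule Least_eq_0) (auto intro: exI[of _ "[]"])

lemma coxlen_eq_0_iff:
  assumes "w \<in> Wgrp N"
  shows "coxlen N w = 0 \<longleftrightarrow> w = id"
proof
  assume "coxlen N w = 0"
  then have "inversions N w = {}"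
    using coxlen_eq_inversion_number[OF assms] by (simp add: inversion_number_def)
  then show "w = id"
    using permutes_Iset_eq_if_inversions_eq[OF _ permutes_id] assms by (simp add: Wgrp_def)
qed simp

section \<open>Parabolic subgroups\<close>

lemma sref_in_parab: "i \<in> K \<Longrightarrow> sref i \<in> parab K"
  unfolding parab_def by (auto intro!: exI[of _ "[i]"])

lemma id_in_parab: "id \<in> parab K"
  unfolding parab_def by (auto intro!: exI[of _ "[]"])

lemma parab_mono: "K \<subseteq> K' \<Longrightarrow> parab K \<subseteq> parab K'"
  by (auto simp: parab_def)

lemma parab_comp:
  assumes "p \<in> parab K" and "q \<in> parab K"
  shows "p \<circ> q \<in> parab K"
proof -
  obtain ws vs where "set ws \<subseteq> K" "p = word_prod ws" "set vs \<subseteq> K" "q = word_prod vs"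
    using assms by (auto simp: parab_def)
  then have "set (ws @ vs) \<subseteq> K" "p \<circ> q = word_prod (ws @ vs)"
    by (simp_all add: word_prod_append)
  then show ?thesis unfolding parab_def by blast
qed

lemma parab_respects_cut: "p \<in> parab K \<Longrightarrow> k \<notin> K \<Longrightarrow> respects_cut k p"
  by (auto simp: parab_def intro: word_prod_respects_cut)

lemma mem_parab_iff:
  assumes "K \<subseteq> {1..N}"
  shows "p \<in> parab K \<longleftrightarrow> p permutes Iset N \<and> (\<forall>k\<in>{1..N}. k \<notin> K \<longrightarrow> respects_cut k p)"
proof
  assume p: "p \<in> parab K"
  then obtain ws where "set ws \<subseteq> K" "p = word_prod ws" by (auto simp: parab_def)
  then have "p permutes Iset N" using assms word_prod_permutes_Iset by blast
  with p show "p permutes Iset N \<and> (\<forall>k\<in>{1..N}. k \<notin> K \<longrightarrow> respects_cut k p)"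
    using parab_respects_cut by blast
next
  assume "p permutes Iset N \<and> (\<forall>k\<in>{1..N}. k \<notin> K \<longrightarrow> respects_cut k p)"
  then obtain ws where "set ws \<subseteq> K" "word_prod ws = p"
    using word_of_length_inversion_number by blast
  then show "p \<in> parab K" unfolding parab_def by blast
qed

lemma parab_permutes_Iset: "K \<subseteq> {1..N} \<Longrightarrow> p \<in> parab K \<Longrightarrow> p permutes Iset N"
  by (simp add: mem_parab_iff)

lemma parab_subset_Wgrp: "K \<subseteq> {1..N} \<Longrightarrow> parab K \<subseteq> Wgrp N"
  by (auto simp: Wgrp_def parab_permutes_Iset)

lemma coxlen_parab: "K \<subseteq> {1..N} \<Longrightarrow> p \<in> parab K \<Longrightarrow> coxlen N p = inversion_number N p"
  using coxlen_eq_inversion_number parab_subset_Wgrp by blast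

lemma inv_in_parab: "K \<subseteq> {1..N} \<Longrightarrow> p \<in> parab K \<Longrightarrow> inv p \<in> parab K"
  by (auto simp: mem_parab_iff intro: permutes_inv respects_cut_inv)

lemma transpose_in_parab_iff:
  assumes "K \<subseteq> {1..N}" and "1 \<le> j" "j < i" "i \<le> Suc N"
  shows "transpose i j \<in> parab K \<longleftrightarrow> {j..<i} \<subseteq> K"
proof
  assume t: "transpose i j \<in> parab K"
  show "{j..<i} \<subseteq> K"
  proof
    fix k assume "k \<in> {j..<i}"
    then have "\<not> respects_cut k (transpose i j)"
      unfolding respects_cut_def by (auto intro!: exI[of _ j])
    then show "k \<in> K" using parab_respects_cut[OF t] by blast
  qed
next
  assume "{j..<i} \<subseteq> K"
  then have "respects_cut k (transpose i j)" if "k \<notin> K" for k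
  proof -
    have "k \<notin> {j..<i}" using that \<open>{j..<i} \<subseteq> K\<close> by blast
    then have "k < j \<or> i \<le> k" by auto
    then show ?thesis using \<open>j < i\<close> unfolding respects_cut_def transpose_def by auto
  qed
  moreover have "transpose i j permutes Iset N"
    using assms by (intro permutes_swap_id) (auto simp: Iset_def)
  ultimately show "transpose i j \<in> parab K" using mem_parab_iff[OF assms(1)] by blast
qed

lemma negroots_eq:
  assumes "K \<subseteq> {1..N}"
  shows "negroots N K = {(i, j). 1 \<le> j \<and> j < i \<and> i \<le> Suc N \<and> {j..<i} \<subseteq> K}"
proof (rule set_eqI)
  fix q :: "nat \<times> nat"
  obtain i j where q: "q = (i, j)" by fastforce
  show "q \<in> negroots N K \<longleftrightarrow> q \<in> {(i, j). 1 \<le> j \<and> j < i \<and> i \<le> Suc N \<and> {j..<i} \<subseteq> K}"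
    unfolding q negroots_def using transpose_in_parab_iff[OF assms, of j i] by auto
qed

lemma parab_Int_minreps_self:
  assumes K: "K \<subseteq> {1..N}"
  shows "parab K \<inter> minreps N K = {id}"
proof (intro equalityI subsetI)
  fix v assume v: "v \<in> parab K \<inter> minreps N K"
  then have "coxlen N v \<le> coxlen N (v \<circ> inv v)"
    using inv_in_parab[OF K] by (auto simp: minreps_def)
  then have "coxlen N v = 0"
    using permutes_inv_o(1)[OF parab_permutes_Iset[OF K]] v by simp
  then show "v \<in> {id}" using coxlen_eq_0_iff parab_subset_Wgrp[OF K] v by blast
qed (simp add: id_in_parab minreps_def Wgrp_def permutes_id)

definition supported_on :: "nat set \<Rightarrow> (nat \<Rightarrow> nat) \<Rightarrow> bool" where
  "supported_on T p \<longleftrightarrow> (\<forall>x. x \<notin> T \<longrightarrow> p x = x) \<and> (\<forall>x\<in>T. p x \<in> T)"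

lemma supported_on_comp: "supported_on T p \<Longrightarrow> supported_on T q \<Longrightarrow> supported_on T (p \<circ> q)"
  by (simp add: supported_on_def)

lemma parab_supported_on:
  assumes "\<forall>i\<in>K. i \<in> T \<and> Suc i \<in> T" and "p \<in> parab K"
  shows "supported_on T p"
proof -
  obtain ws where ws: "set ws \<subseteq> K" "p = word_prod ws" using assms(2) by (auto simp: parab_def)
  have "supported_on T (word_prod ws)" using ws(1)
  proof (induction ws)
    case Nil
    then show ?case by (simp add: supported_on_def)
  next
    case (Cons i ws)
    then have "supported_on T (sref i)"
      using assms(1) unfolding supported_on_def sref_def transpose_def by auto
    with Cons show ?case unfolding word_prod_Cons by (intro supported_on_comp) auto
  qed
  with ws show ?thesis by simp
qed

lemma supported_on_complements_commute:
  assumes "supported_on T p" and "supported_on (- T) q"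
  shows "p \<circ> q = q \<circ> p"
proof
  fix x show "(p \<circ> q) x = (q \<circ> p) x"
    using assms by (cases "x \<in> T") (auto simp: supported_on_def)
qed

section \<open>Longest elements\<close>

lemma maximal_length_descent:
  assumes K: "K \<subseteq> {1..N}" and w: "w \<in> parab K"
    and longest: "\<forall>u\<in>parab K. coxlen N u \<le> coxlen N w" and k: "k \<in> K"
  shows "w (Suc k) < w k"
proof (rule ccontr)
  assume "\<not> w (Suc k) < w k"
  moreover have "w k \<noteq> w (Suc k)"
    using permutes_inj[OF parab_permutes_Iset[OF K w]] by (metis injD n_not_Suc_n)
  ultimately have "w k < w (Suc k)" by simp
  have ws: "w \<circ> sref k \<in> parab K" using w sref_in_parab[OF k] by (rule parab_comp)
  have "k \<in> {1..N}" using k K by blast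
  then have "inversion_number N (w \<circ> sref k) = inversion_number N w + 1"
    using inversion_number_comp_sref[of k N w] \<open>w k < w (Suc k)\<close> by simp
  then have "coxlen N (w \<circ> sref k) = coxlen N w + 1"
    using coxlen_parab[OF K] w ws by simp
  with longest ws show False by fastforce
qed

lemma inversions_of_full_descent:
  assumes K: "K \<subseteq> {1..N}" and w: "w \<in> parab K" and desc: "\<forall>k\<in>K. w (Suc k) < w k"
  shows "inversions N w = {(i, j). i \<in> Iset N \<and> j \<in> Iset N \<and> i < j \<and> {i..<j} \<subseteq> K}"
proof -
  have "w j < w i \<longleftrightarrow> {i..<j} \<subseteq> K" if "i < j" for i j
  proof
    assume "w j < w i"
    show "{i..<j} \<subseteq> K"
    proof
      fix k assume k: "k \<in> {i..<j}"
      show "k \<in> K"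
      proof (rule ccontr)
        assume "k \<notin> K"
        then have "w i \<le> k" "\<not> w j \<le> k"
          using parab_respects_cut[OF w] k by (auto simp: respects_cut_def)
        with \<open>w j < w i\<close> show False by simp
      qed
    qed
  next
    assume "{i..<j} \<subseteq> K"
    then have "w (Suc k) < w k" if "i \<le> k" "k < j" for k
      using desc that by auto
    then show "w j < w i" using transp_chain[of "(>)" i j w] \<open>i < j\<close> by simp
  qed
  then show ?thesis by (auto simp: inversions_def)
qed

lemma full_descent_unique:
  assumes K: "K \<subseteq> {1..N}" and "w \<in> parab K" "w' \<in> parab K"
    and "\<forall>k\<in>K. w (Suc k) < w k" "\<forall>k\<in>K. w' (Suc k) < w' k"
  shows "w = w'"
proof (rule permutes_Iset_eq_if_inversions_eq)
  show "w permutes Iset N" "w' permutes Iset N" using assms(2,3) by (simp_all add: parab_permutes_Iset[OF K])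
  show "inversions N w = inversions N w'"
    by (simp add: inversions_of_full_descent[OF K assms(2,4)] inversions_of_full_descent[OF K assms(3,5)])
qed

lemma longest_eq:
  assumes K: "K \<subseteq> {1..N}" and w: "w \<in> parab K"
    and longest: "\<forall>u\<in>parab K. coxlen N u \<le> coxlen N w"
  shows "longest N K = w"
  unfolding longest_def
proof (rule the_equality)
  show "w \<in> parab K \<and> (\<forall>u\<in>parab K. coxlen N u \<le> coxlen N w)" using w longest ..
next
  fix v assume v: "v \<in> parab K \<and> (\<forall>u\<in>parab K. coxlen N u \<le> coxlen N v)"
  then show "v = w"
    using full_descent_unique[OF K _ w] maximal_length_descent[OF K] w longest by blast
qed

lemma longest_spec:
  assumes K: "K \<subseteq> {1..N}"
  shows "longest N K \<in> parab K" and "\<forall>u\<in>parab K. coxlen N u \<le> coxlen N (longest N K)"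
proof -
  have "finite (parab K)"
    using finite_subset[OF parab_subset_Wgrp[OF K]] finite_permutations[of "Iset N"]
    by (simp add: Wgrp_def Iset_def)
  then have "Max (coxlen N ` parab K) \<in> coxlen N ` parab K"
    using id_in_parab by (intro Max_in) auto
  then obtain w where w: "w \<in> parab K" "coxlen N w = Max (coxlen N ` parab K)" by auto
  with \<open>finite (parab K)\<close> have "\<forall>u\<in>parab K. coxlen N u \<le> coxlen N w" by simp
  then show "longest N K \<in> parab K" "\<forall>u\<in>parab K. coxlen N u \<le> coxlen N (longest N K)"
    using longest_eq[OF K w(1)] w(1) by simp_all
qed

lemma inversion_number_inv:
  assumes p: "p permutes Iset N"
  shows "inversion_number N (inv p) = inversion_number N p"
proof -
  have "bij_betw (\<lambda>(i, j). (p j, p i)) (inversions N p) (inversions N (inv p))"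
  proof (rule bij_betw_byWitness[where f'="\<lambda>(x, y). (inv p y, inv p x)"])
    show "\<forall>a\<in>inversions N p. (\<lambda>(x, y). (inv p y, inv p x)) ((\<lambda>(i, j). (p j, p i)) a) = a"
      by (auto simp: permutes_inverses[OF p])
    show "\<forall>a\<in>inversions N (inv p). (\<lambda>(i, j). (p j, p i)) ((\<lambda>(x, y). (inv p y, inv p x)) a) = a"
      by (auto simp: permutes_inverses[OF p])
    show "(\<lambda>(i, j). (p j, p i)) ` inversions N p \<subseteq> inversions N (inv p)"
      using permutes_in_image[OF p] by (auto simp: inversions_def permutes_inverses[OF p])
    show "(\<lambda>(x, y). (inv p y, inv p x)) ` inversions N (inv p) \<subseteq> inversions N p"
      using permutes_in_image[OF permutes_inv[OF p]]
      by (auto simp: inversions_def permutes_inverses[OF p])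
  qed
  then show ?thesis unfolding inversion_number_def by (metis bij_betw_same_card)
qed

lemma longest_comp_longest:
  assumes K: "K \<subseteq> {1..N}"
  shows "longest N K \<circ> longest N K = id"
proof -
  let ?w = "longest N K"
  have w: "?w \<in> parab K" "\<forall>u\<in>parab K. coxlen N u \<le> coxlen N ?w"
    using longest_spec[OF K] by blast+
  have p: "?w permutes Iset N" using parab_permutes_Iset[OF K w(1)] .
  have iw: "inv ?w \<in> parab K" using inv_in_parab[OF K w(1)] .
  then have "coxlen N (inv ?w) = coxlen N ?w"
    using coxlen_parab[OF K] w(1) inversion_number_inv[OF p] by simp
  then have "?w = inv ?w" using longest_eq[OF K iw] w(2) by simp
  then show ?thesis using permutes_inv_o(1)[OF p] by metis
qed

section \<open>Parabolic subgroups of separated blocks\<close>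

locale separated_blocks =
  fixes N a b :: nat and A :: "nat set"
  assumes one_le_a: "1 \<le> a" and a_le_b: "a \<le> b" and b_le_N: "b \<le> N"
    and A_outside: "A \<subseteq> {1..N} - {a - 1..b + 1}"
begin

definition block :: "nat set" where
  "block = {a..Suc b}"

lemma A_subset_Pi: "A \<subseteq> {1..N}"
  using A_outside by blast

lemma A_apart:
  assumes "x \<in> A"
  shows "Suc x < a \<or> Suc b < x"
proof -
  have "x \<notin> {a - 1..b + 1}" using assms A_outside by blast
  then show ?thesis by auto
qed

lemma subset_Pi: "K \<subseteq> {a..b} \<Longrightarrow> K \<subseteq> {1..N}"
  using one_le_a b_le_N by auto

lemma Un_A_subset_Pi: "K \<subseteq> {a..b} \<Longrightarrow> K \<union> A \<subseteq> {1..N}"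
  using subset_Pi A_subset_Pi by blast

lemma Int_A_empty: "K \<subseteq> {a..b} \<Longrightarrow> K \<inter> A = {}"
  using A_apart by fastforce

lemma cut_points_notin:
  assumes "K \<subseteq> {a..b}"
  shows "a - 1 \<notin> K \<union> A" and "Suc b \<notin> K \<union> A"
proof -
  have "a - 1 \<in> {a - 1..b + 1}" "Suc b \<in> {a - 1..b + 1}" using a_le_b by auto
  then have "a - 1 \<notin> A" "Suc b \<notin> A" using A_outside by blast+
  moreover have "a - 1 \<notin> {a..b}" "Suc b \<notin> {a..b}" using one_le_a by auto
  then have "a - 1 \<notin> K" "Suc b \<notin> K" using assms by blast+
  ultimately show "a - 1 \<notin> K \<union> A" "Suc b \<notin> K \<union> A" by blast+
qed

lemma parab_supported_on_block:
  assumes "K \<subseteq> {a..b}" and "x \<in> parab K"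
  shows "supported_on block x"
proof (rule parab_supported_on[OF _ assms(2)])
  show "\<forall>i\<in>K. i \<in> block \<and> Suc i \<in> block" using assms(1) by (auto simp: block_def)
qed

lemma parab_A_supported_on_complement:
  assumes "y \<in> parab A"
  shows "supported_on (- block) y"
proof (rule parab_supported_on[OF _ assms])
  show "\<forall>i\<in>A. i \<in> - block \<and> Suc i \<in> - block" using A_apart by (force simp: block_def)
qed

lemma parab_comp_commute:
  "K \<subseteq> {a..b} \<Longrightarrow> x \<in> parab K \<Longrightarrow> y \<in> parab A \<Longrightarrow> x \<circ> y = y \<circ> x"
  by (rule supported_on_complements_commute[OF parab_supported_on_block parab_A_supported_on_complement])

lemma parab_Un_comp:
  "K \<subseteq> {a..b} \<Longrightarrow> x \<in> parab K \<Longrightarrow> y \<in> parab A \<Longrightarrow> x \<circ> y \<in> parab (K \<union> A)"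
  using parab_mono[of K "K \<union> A"] parab_mono[of A "K \<union> A"] parab_comp by blast

lemma parab_Un_decompose:
  assumes K: "K \<subseteq> {a..b}" and p: "p \<in> parab (K \<union> A)"
  obtains x y where "x \<in> parab K" "y \<in> parab A" "p = x \<circ> y"
proof -
  obtain ws where ws: "set ws \<subseteq> K \<union> A" "p = word_prod ws" using p by (auto simp: parab_def)
  have "\<exists>x\<in>parab K. \<exists>y\<in>parab A. word_prod ws = x \<circ> y" using ws(1)
  proof (induction ws)
    case Nil
    then show ?case by (metis comp_id id_in_parab word_prod_Nil)
  next
    case (Cons i ws)
    then have "set ws \<subseteq> K \<union> A" by simp
    then obtain x y where xy: "x \<in> parab K" "y \<in> parab A" "word_prod ws = x \<circ> y"
      using Cons.IH by blast
    show ?case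
    proof (cases "i \<in> K")
      case True
      then have "word_prod (i # ws) = (sref i \<circ> x) \<circ> y" "sref i \<circ> x \<in> parab K"
        using xy by (simp_all add: comp_assoc sref_in_parab parab_comp)
      with xy(2) show ?thesis by blast
    next
      case False
      then have i: "sref i \<in> parab A" using Cons.prems by (simp add: sref_in_parab)
      then have "word_prod (i # ws) = x \<circ> (sref i \<circ> y)"
        using xy parab_comp_commute[OF K xy(1) i] by (metis comp_assoc word_prod_Cons)
      with xy(1) i xy(2) show ?thesis using parab_comp by blast
    qed
  qed
  with ws(2) that show ?thesis by blast
qed

lemma inversion_block_iff:
  assumes K: "K \<subseteq> {a..b}" and p: "p \<in> parab (K \<union> A)" and ij: "(i, j) \<in> inversions N p"
  shows "i \<in> block \<longleftrightarrow> j \<in> block"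
proof -
  have "i < j" using ij by (simp add: inversions_def)
  have below: "j \<le> a - 1" if "i \<le> a - 1"
    using inversion_within_cut parab_respects_cut[OF p cut_points_notin(1)[OF K]] ij that .
  have above: "j \<le> Suc b" if "i \<le> Suc b"
    using inversion_within_cut parab_respects_cut[OF p cut_points_notin(2)[OF K]] ij that .
  show ?thesis
  proof
    assume "i \<in> block"
    then show "j \<in> block" using \<open>i < j\<close> above by (auto simp: block_def)
  next
    assume j: "j \<in> block"
    show "i \<in> block"
    proof (rule ccontr)
      assume "i \<notin> block"
      then have "i \<le> a - 1" using j \<open>i < j\<close> by (auto simp: block_def)
      with below j one_le_a show False by (auto simp: block_def)
    qed
  qed
qed

lemma inversions_comp:
  assumes K: "K \<subseteq> {a..b}" and x: "x \<in> parab K" and y: "y \<in> parab A"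
  shows "inversions N (x \<circ> y) = inversions N x \<union> inversions N y"
    and "inversions N x \<inter> inversions N y = {}"
proof -
  have sx: "supported_on block x" using parab_supported_on_block[OF K x] .
  have sy: "supported_on (- block) y" using parab_A_supported_on_complement[OF y] .
  have in_Un: "x \<in> parab (K \<union> A)" "y \<in> parab (K \<union> A)" "x \<circ> y \<in> parab (K \<union> A)"
    using parab_Un_comp[OF K x id_in_parab] parab_Un_comp[OF K id_in_parab y] parab_Un_comp[OF K x y]
    by simp_all
  have same_side: "(i \<in> block \<longleftrightarrow> j \<in> block)"
    if "(i, j) \<in> inversions N x \<or> (i, j) \<in> inversions N y \<or> (i, j) \<in> inversions N (x \<circ> y)" for i j
    using that inversion_block_iff[OF K in_Un(1)] inversion_block_iff[OF K in_Un(2)]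
      inversion_block_iff[OF K in_Un(3)] by blast
  have "((i, j) \<in> inversions N (x \<circ> y) \<longleftrightarrow> (i, j) \<in> inversions N x \<or> (i, j) \<in> inversions N y)
      \<and> \<not> ((i, j) \<in> inversions N x \<and> (i, j) \<in> inversions N y)" for i j
  proof -
    consider "i \<in> block" "j \<in> block" | "i \<notin> block" "j \<notin> block"
      | "\<not> (i \<in> block \<longleftrightarrow> j \<in> block)" by blast
    then show ?thesis
    proof cases
      case 1
      then have "y i = i" "y j = j" using sy by (simp_all add: supported_on_def)
      then show ?thesis by (auto simp: inversions_def)
    next
      case 2
      then have "x i = i" "x j = j" "x (y i) = y i" "x (y j) = y j"
        using sx sy by (simp_all add: supported_on_def)
      then show ?thesis by (auto simp: inversions_def)
    next
      case 3
      then show ?thesis using same_side[of i j] by blast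
    qed
  qed
  then show "inversions N (x \<circ> y) = inversions N x \<union> inversions N y"
    and "inversions N x \<inter> inversions N y = {}" by auto
qed

lemma inversion_number_comp:
  assumes "K \<subseteq> {a..b}" and "x \<in> parab K" and "y \<in> parab A"
  shows "inversion_number N (x \<circ> y) = inversion_number N x + inversion_number N y"
  unfolding inversion_number_def inversions_comp[OF assms]
  by (rule card_Un_disjoint) (simp_all add: inversions_comp(2)[OF assms])

lemma coxlen_comp:
  assumes K: "K \<subseteq> {a..b}" and x: "x \<in> parab K" and y: "y \<in> parab A"
  shows "coxlen N (x \<circ> y) = coxlen N x + coxlen N y"
  using coxlen_parab[OF Un_A_subset_Pi[OF K] parab_Un_comp[OF assms]]
    coxlen_parab[OF subset_Pi[OF K] x] coxlen_parab[OF A_subset_Pi y] inversion_number_comp[OF assms]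
  by simp

lemma longest_Un:
  assumes K: "K \<subseteq> {a..b}"
  shows "longest N (K \<union> A) = longest N K \<circ> longest N A"
proof (rule longest_eq[OF Un_A_subset_Pi[OF K]])
  note wK = longest_spec[OF subset_Pi[OF K]]
  note wA = longest_spec[OF A_subset_Pi]
  show "longest N K \<circ> longest N A \<in> parab (K \<union> A)"
    using parab_Un_comp[OF K wK(1) wA(1)] .
  show "\<forall>u\<in>parab (K \<union> A). coxlen N u \<le> coxlen N (longest N K \<circ> longest N A)"
  proof
    fix u assume "u \<in> parab (K \<union> A)"
    then obtain x y where xy: "x \<in> parab K" "y \<in> parab A" "u = x \<circ> y"
      using parab_Un_decompose[OF K] by blast
    then have "coxlen N u = coxlen N x + coxlen N y" using coxlen_comp[OF K] by simp
    also have "\<dots> \<le> coxlen N (longest N K) + coxlen N (longest N A)"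
      using wK(2) wA(2) xy by (simp add: add_mono)
    also have "\<dots> = coxlen N (longest N K \<circ> longest N A)"
      using coxlen_comp[OF K wK(1) wA(1)] by simp
    finally show "coxlen N u \<le> coxlen N (longest N K \<circ> longest N A)" .
  qed
qed

lemma longest_Un_comp_longest_Un:
  assumes "J' \<subseteq> J" and J: "J \<subseteq> {a..b}"
  shows "longest N (J \<union> A) \<circ> longest N (J' \<union> A) = longest N J \<circ> longest N J'"
proof -
  have J': "J' \<subseteq> {a..b}" using assms by blast
  let ?wJ = "longest N J" and ?wJ' = "longest N J'" and ?wA = "longest N A"
  have commute: "?wJ' \<circ> ?wA = ?wA \<circ> ?wJ'"
    using parab_comp_commute[OF J' longest_spec(1)[OF subset_Pi[OF J']]
      longest_spec(1)[OF A_subset_Pi]] .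
  have "longest N (J \<union> A) \<circ> longest N (J' \<union> A) = ?wJ \<circ> (?wA \<circ> ?wJ') \<circ> ?wA"
    by (simp only: longest_Un[OF J] longest_Un[OF J'] comp_assoc)
  also have "\<dots> = ?wJ \<circ> ?wJ' \<circ> (?wA \<circ> ?wA)"
    by (simp only: commute[symmetric] comp_assoc)
  also have "\<dots> = ?wJ \<circ> ?wJ'"
    using longest_comp_longest[OF A_subset_Pi] by simp
  finally show ?thesis .
qed

lemma parab_Int_minreps_Un_subset:
  assumes "J' \<subseteq> J" and J: "J \<subseteq> {a..b}"
  shows "parab (J \<union> A) \<inter> minreps N (J' \<union> A) \<subseteq> parab J \<inter> minreps N J'"
proof
  fix v assume v: "v \<in> parab (J \<union> A) \<inter> minreps N (J' \<union> A)"
  then obtain x y where xy: "x \<in> parab J" "y \<in> parab A" "v = x \<circ> y"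
    using parab_Un_decompose[OF J] by blast
  have y_perm: "y permutes Iset N" using parab_permutes_Iset[OF A_subset_Pi xy(2)] .
  have "inv y \<in> parab (J' \<union> A)"
    using inv_in_parab[OF A_subset_Pi xy(2)] parab_mono[of A "J' \<union> A"] by blast
  then have "coxlen N v \<le> coxlen N (v \<circ> inv y)" using v by (simp add: minreps_def)
  also have "v \<circ> inv y = x" using xy(3) permutes_inv_o(1)[OF y_perm] by (simp add: comp_assoc)
  finally have "coxlen N v \<le> coxlen N x" .
  moreover have "coxlen N v = coxlen N x + coxlen N y"
    unfolding xy(3) by (rule coxlen_comp[OF J xy(1,2)])
  ultimately have "coxlen N y = 0" by linarith
  then have "v = x" using coxlen_eq_0_iff y_perm xy(3) by (simp add: Wgrp_def)
  moreover have "parab J' \<subseteq> parab (J' \<union> A)" by (rule parab_mono) blast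
  ultimately show "v \<in> parab J \<inter> minreps N J'" using v xy(1) by (auto simp: minreps_def)
qed

lemma parab_Int_minreps_subset_Un:
  assumes "J' \<subseteq> J" and J: "J \<subseteq> {a..b}"
  shows "parab J \<inter> minreps N J' \<subseteq> parab (J \<union> A) \<inter> minreps N (J' \<union> A)"
proof
  fix v assume v: "v \<in> parab J \<inter> minreps N J'"
  have "coxlen N v \<le> coxlen N (v \<circ> u)" if u: "u \<in> parab (J' \<union> A)" for u
  proof -
    have J': "J' \<subseteq> {a..b}" using assms by blast
    obtain x y where xy: "x \<in> parab J'" "y \<in> parab A" "u = x \<circ> y"
      using parab_Un_decompose[OF J' u] by blast
    have vx: "v \<circ> x \<in> parab J" using v xy(1) parab_mono[OF assms(1)] parab_comp by blast
    have "coxlen N v \<le> coxlen N (v \<circ> x)" using v xy(1) by (simp add: minreps_def)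
    also have "\<dots> \<le> coxlen N (v \<circ> x \<circ> y)" using coxlen_comp[OF J vx xy(2)] by simp
    finally show ?thesis using xy(3) by (simp add: comp_assoc)
  qed
  moreover have "parab J \<subseteq> parab (J \<union> A)" by (rule parab_mono) blast
  ultimately show "v \<in> parab (J \<union> A) \<inter> minreps N (J' \<union> A)" using v by (auto simp: minreps_def)
qed

lemma parab_Int_minreps_Un:
  assumes "J' \<subseteq> J" and "J \<subseteq> {a..b}"
  shows "parab (J \<union> A) \<inter> minreps N (J' \<union> A) = parab J \<inter> minreps N J'"
  using parab_Int_minreps_Un_subset[OF assms] parab_Int_minreps_subset_Un[OF assms] ..

lemma interval_subset_Un:
  assumes K: "K \<subseteq> {a..b}" and sub: "{j..<i} \<subseteq> K \<union> A"
  shows "{j..<i} \<subseteq> K \<or> {j..<i} \<subseteq> A"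
proof (rule ccontr)
  assume "\<not> ?thesis"
  then obtain x y where x: "x \<in> {j..<i}" "x \<in> A" and y: "y \<in> {j..<i}" "y \<in> K"
    using sub by blast
  have "a \<le> y" "y \<le> b" using y(2) K by auto
  with A_apart[OF x(2)] x(1) y(1) have "a - 1 \<in> {j..<i} \<or> Suc b \<in> {j..<i}" by auto
  then show False using sub cut_points_notin[OF K] by blast
qed

lemma negroots_Diff_Un:
  assumes "J' \<subseteq> J" and J: "J \<subseteq> {a..b}"
  shows "negroots N (J \<union> A) - negroots N (J' \<union> A) = negroots N J - negroots N J'"
proof -
  have J': "J' \<subseteq> {a..b}" using assms by blast
  have "({j..<i} \<subseteq> J \<union> A \<and> \<not> {j..<i} \<subseteq> J' \<union> A) \<longleftrightarrow> ({j..<i} \<subseteq> J \<and> \<not> {j..<i} \<subseteq> J')"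
    if "j < i" for i j
  proof (cases "{j..<i} \<subseteq> A")
    case True
    moreover have "j \<in> {j..<i}" using that by simp
    ultimately have "j \<notin> J" using Int_A_empty[OF J] by blast
    with True \<open>j \<in> {j..<i}\<close> show ?thesis by blast
  next
    case False
    then show ?thesis using interval_subset_Un[OF J] interval_subset_Un[OF J'] by blast
  qed
  then show ?thesis
    unfolding negroots_eq[OF Un_A_subset_Pi[OF J]] negroots_eq[OF Un_A_subset_Pi[OF J']]
      negroots_eq[OF subset_Pi[OF J]] negroots_eq[OF subset_Pi[OF J']]
    by auto
qed

end

lemma gamma_self:
  assumes "K \<subseteq> {1..N}"
  shows "gamma N act em t K K = gamma N act em t {} {}"
  unfolding gamma_def parab_Int_minreps_self[OF assms] parab_Int_minreps_self[of "{}" N, simplified]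
    longest_comp_longest[OF assms] longest_comp_longest[of "{}" N, simplified] ..

lemma Yop_self:
  assumes "K \<subseteq> {1..N}"
  shows "Yop N act xh K K = Yop N act xh {} {}"
  unfolding Yop_def xquot_def parab_Int_minreps_self[OF assms]
    parab_Int_minreps_self[of "{}" N, simplified] by simp

theorem lemma6p5:
  fixes N a b :: nat and J J' A :: "nat set"
    and actm :: "(nat \<Rightarrow> nat) \<Rightarrow> 'm::field \<Rightarrow> 'm" and em :: "nat \<Rightarrow> nat \<Rightarrow> 'm" and tm :: 'm
    and actt :: "(nat \<Rightarrow> nat) \<Rightarrow> 'h::field \<Rightarrow> 'h" and xh :: "nat \<Rightarrow> nat \<Rightarrow> 'h" and th :: 'h
  assumes "1 \<le> N"
    and "J' \<subseteq> J" and "J \<subseteq> {1..N}"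
    and "a \<in> {1..N}" and "b \<in> {1..N}" and "J \<subseteq> {a..b}"
    and "A \<subseteq> {1..N} - {a - 1..b + 1}"
    and "mult_setting N actm em tm"
    and "hyp_setting N actt xh th"
  shows "gamma N actm em tm J J' = gamma N actm em tm (J \<union> A) (J' \<union> A)
       \<and> Yop N actt xh J J' = Yop N actt xh (J \<union> A) (J' \<union> A)"
proof (cases "J = {}")
  case True
  \<comment> \<open>then a \<le> b may fail, so A need not be separated from J, but both sides are K/K\<close>
  moreover have "J' = {}" using True assms(2) by blast
  moreover have "A \<subseteq> {1..N}" using assms(7) by blast
  ultimately show ?thesis
    using gamma_self[of A N actm em tm] Yop_self[of A N actt xh] by simp
next
  case False
  with assms(6) have "a \<le> b" by auto
  with assms(4,5,7) interpret separated_blocks N a b A by unfold_locales auto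
  show ?thesis
    unfolding gamma_def Yop_def xquot_def parab_Int_minreps_Un[OF assms(2,6)]
      longest_Un_comp_longest_Un[OF assms(2,6)] negroots_Diff_Un[OF assms(2,6)] by simp
qed

end
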